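(* Let $\mathcal{P}$ be a dipath space and let $f: P \to V(\mathcal{P})$ be a walk in $\mathcal{P}$. Then the space $\widehat{f}$ induced by $f$ is finitary and connected.
   Context: A subset $Y$ of a linearly ordered set $X$ is called complete (in $X$) if every nonempty $Z \subseteq Y$ has a supremum and an infimum in $X$ and both lie in $Y$. A path is a linearly ordered set $(P,\le_P)$ that is complete in itself. Distinct paths may share elements; intersections and unions of paths refer to their underlying sets. A path is trivial if it has exactly one element. A set of paths is compatible if for any two paths $P,Q$ in it, $P\cap Q$ is complete in $P$ (with the order of $P$). For $x \le y$ in a path $P$, the segment of $P$ from $x$ to $y$ is the interval $[x,y]$ of $P$ with the induced order. A path $P$ connects to a path $Q$ if $P \cap Q=\{x\}$ where $x=\max P=\min Q$; in this case the concatenation of $P$ and $Q$ is $P\cup Q$ with the order extending both orders in which every element of $P$ precedes every element of $Q$. The inverse of a path is the same set with the reversed order. A dipath space is a compatible set of paths closed under segments and under concatenations (whenever $P,Q$ are members and $P$ connects to $Q$, their concatenation is a member). A path space is a dipath space closed under inverses. The ground set $V(\mathcal{P})$ is the union of the underlying sets of the paths of $\mathcal{P}$. For a set of paths $\mathcal{Q}$, $\widehat{\mathcal{Q}}$ denotes the set obtained by first adding all segments of paths of $\mathcal{Q}$ and then closing under concatenations (repeatedly adding, in countably many steps, concatenations of pairs of paths obtained so far where the first connects to the second); $\overline{\mathcal{Q}}$ denotes $\widehat{\mathcal{Q}'}$ where $\mathcal{Q}'$ is $\mathcal{Q}$ together with the inverses of its paths. For a path space $\mathcal{S}$, write $x\sim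 y$ if some path of $\mathcal{S}$ has minimum $x$ and maximum $y$; $\mathcal{S}$ is connected if $V(\mathcal{S})$ is a single $\sim$-class; a dipath space $\mathcal{S}$ is connected if $\overline{\mathcal{S}}$ is connected. A dipath space $\mathcal{S}$ is finitary if there is a finite set of paths $\mathcal{Q}$ with $\widehat{\mathcal{Q}}=\mathcal{S}$. Walks: Let $P$ be a path (not necessarily in $\mathcal{P}$). For a closed interval $I$ of $P$ on which $f$ is injective, $f[I]$ denotes the image of $I$ ordered so that $f$ is order-preserving. A walk in $\mathcal{P}$ is a map $f:P\to V(\mathcal{P})$ such that for every $x\in P$: if $x\neq\max P$ there is $y>x$ such that for every $z$ with $x<z\le y$, $f$ is injective on $[x,z]$ and $f[[x,z]]\in\mathcal{P}$; and if $x\neq \min P$ there is $y<x$ such that for every $z$ with $y\le z<x$, $f$ is injective on $[z,x]$ and $f[[z,x]]\in\mathcal{P}$. Let $\mathcal{S}_f$ be the set of all paths $f[I]$, where $I$ is a closed interval of $P$ on which $f$ is injective and $f[I]\in\mathcal{P}$. The space induced by $f$ is $\widehat{f}:=\widehat{\mathcal{S}_f}$. *)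

theory Defs
  imports Main
begin

text \<open>A (linearly ordered) path is represented by its reflexive order relation
  R :: 'a rel; its underlying set is Field R.\<close>

definition is_sup :: "'a rel \<Rightarrow> 'a set \<Rightarrow> 'a \<Rightarrow> bool" where
  "is_sup R Z s \<longleftrightarrow> s \<in> Field R \<and> (\<forall>z\<in>Z. (z, s) \<in> R) \<and>
     (\<forall>u\<in>Field R. (\<forall>z\<in>Z. (z, u) \<in> R) \<longrightarrow> (s, u) \<in> R)"

definition is_inf :: "'a rel \<Rightarrow> 'a set \<Rightarrow> 'a \<Rightarrow> bool" where
  "is_inf R Z s \<longleftrightarrow> s \<in> Field R \<and> (\<forall>z\<in>Z. (s, z) \<in> R) \<and>
     (\<forall>u\<in>Field R. (\<forall>z\<in>Z. (u, z) \<in> R) \<longrightarrow> (u, s) \<in> R)"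

definition complete_in :: "'a rel \<Rightarrow> 'a set \<Rightarrow> bool" where
  "complete_in R Y \<longleftrightarrow> Y \<subseteq> Field R \<and>
     (\<forall>Z. Z \<subseteq> Y \<and> Z \<noteq> {} \<longrightarrow> (\<exists>s\<in>Y. is_sup R Z s) \<and> (\<exists>i\<in>Y. is_inf R Z i))"

definition is_path :: "'a rel \<Rightarrow> bool" where
  "is_path R \<longleftrightarrow> Linear_order R \<and> Field R \<noteq> {} \<and> complete_in R (Field R)"

definition compatible :: "'a rel set \<Rightarrow> bool" where
  "compatible S \<longleftrightarrow> (\<forall>P\<in>S. \<forall>Q\<in>S. complete_in P (Field P \<inter> Field Q))"

definition segment :: "'a rel \<Rightarrow> 'a \<Rightarrow> 'a \<Rightarrow> 'a rel" where
  "segment P x y = Restr P {z. (x, z) \<in> P \<and> (z, y) \<in> P}"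

definition segments :: "'a rel \<Rightarrow> 'a rel set" where
  "segments P = {segment P x y | x y. (x, y) \<in> P}"

definition is_max :: "'a rel \<Rightarrow> 'a \<Rightarrow> bool" where
  "is_max P x \<longleftrightarrow> x \<in> Field P \<and> (\<forall>z\<in>Field P. (z, x) \<in> P)"

definition is_min :: "'a rel \<Rightarrow> 'a \<Rightarrow> bool" where
  "is_min P x \<longleftrightarrow> x \<in> Field P \<and> (\<forall>z\<in>Field P. (x, z) \<in> P)"

definition connects :: "'a rel \<Rightarrow> 'a rel \<Rightarrow> bool" where
  "connects P Q \<longleftrightarrow> (\<exists>x. Field P \<inter> Field Q = {x} \<and> is_max P x \<and> is_min Q x)"

definition concat :: "'a rel \<Rightarrow> 'a rel \<Rightarrow> 'a rel" where
  "concat P Q = P \<union> Q \<union> (Field P \<times> Field Q)"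

definition dipath_space :: "'a rel set \<Rightarrow> bool" where
  "dipath_space S \<longleftrightarrow> (\<forall>P\<in>S. is_path P) \<and> compatible S \<and>
     (\<forall>P\<in>S. segments P \<subseteq> S) \<and>
     (\<forall>P\<in>S. \<forall>Q\<in>S. connects P Q \<longrightarrow> concat P Q \<in> S)"

definition path_space :: "'a rel set \<Rightarrow> bool" where
  "path_space S \<longleftrightarrow> dipath_space S \<and> (\<forall>P\<in>S. converse P \<in> S)"

definition ground :: "'a rel set \<Rightarrow> 'a set" where
  "ground S = (\<Union>P\<in>S. Field P)"

inductive_set hat :: "'a rel set \<Rightarrow> 'a rel set" for Q :: "'a rel set" where
  seg: "P \<in> Q \<Longrightarrow> (x, y) \<in> P \<Longrightarrow> segment P x y \<in> hat Q"
| cat: "P \<in> hat Q \<Longrightarrow> R \<in> hat Q \<Longrightarrow> connects P R \<Longrightarrow> concat P R \<in> hat Q"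

definition bar :: "'a rel set \<Rightarrow> 'a rel set" where
  "bar Q = hat (Q \<union> converse ` Q)"

definition sim :: "'a rel set \<Rightarrow> 'a \<Rightarrow> 'a \<Rightarrow> bool" where
  "sim S x y \<longleftrightarrow> (\<exists>P\<in>S. is_min P x \<and> is_max P y)"

definition path_connected_space :: "'a rel set \<Rightarrow> bool" where
  "path_connected_space S \<longleftrightarrow> ground S \<noteq> {} \<and> (\<forall>x\<in>ground S. \<forall>y\<in>ground S. sim S x y)"

definition dipath_connected :: "'a rel set \<Rightarrow> bool" where
  "dipath_connected S \<longleftrightarrow> path_connected_space (bar S)"

definition finitary :: "'a rel set \<Rightarrow> bool" where
  "finitary S \<longleftrightarrow> (\<exists>Q. finite Q \<and> (\<forall>P\<in>Q. is_path P) \<and> hat Q = S)"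

definition img :: "('b \<Rightarrow> 'a) \<Rightarrow> 'b rel \<Rightarrow> 'a rel" where
  "img f I = map_prod f f ` I"

definition walk :: "'a rel set \<Rightarrow> 'b rel \<Rightarrow> ('b \<Rightarrow> 'a) \<Rightarrow> bool" where
  "walk S P f \<longleftrightarrow> is_path P \<and> (\<forall>x\<in>Field P. f x \<in> ground S) \<and>
    (\<forall>x\<in>Field P.
      (\<not> is_max P x \<longrightarrow> (\<exists>y. (x, y) \<in> P \<and> y \<noteq> x \<and>
          (\<forall>z. (x, z) \<in> P \<and> z \<noteq> x \<and> (z, y) \<in> P \<longrightarrow>
             inj_on f (Field (segment P x z)) \<and> img f (segment P x z) \<in> S))) \<and>
      (\<not> is_min P x \<longrightarrow> (\<exists>y. (y, x) \<in> P \<and> y \<noteq> x \<and>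
          (\<forall>z. (y, z) \<in> P \<and> z \<noteq> x \<and> (z, x) \<in> P \<longrightarrow>
             inj_on f (Field (segment P z x)) \<and> img f (segment P z x) \<in> S))))"

definition walk_paths :: "'a rel set \<Rightarrow> 'b rel \<Rightarrow> ('b \<Rightarrow> 'a) \<Rightarrow> 'a rel set" where
  "walk_paths S P f = {img f (segment P x z) | x z. (x, z) \<in> P \<and>
      inj_on f (Field (segment P x z)) \<and> img f (segment P x z) \<in> S}"

definition induced_space :: "'a rel set \<Rightarrow> 'b rel \<Rightarrow> ('b \<Rightarrow> 'a) \<Rightarrow> 'a rel set" where
  "induced_space S P f = hat (walk_paths S P f)"

end

theory Submission
  imports Defs
begin

text \<open>Every point of the walk has a neighbourhood on each side on which \<open>f\<close> is an injective
  path of \<open>\<P>\<close>. Completeness of the domain turns this local information into a global one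
  by a supremum argument: any two parameters \<open>a \<le> b\<close> are joined by a finite chain of such
  good pieces. Taking \<open>a\<close> and \<open>b\<close> to be the ends of the domain, the images of the finitely
  many pieces generate the induced space: an injective part of the walk is cut at the chain points into
  subsegments of pieces, and injectivity makes the images of these parts connect.
  For connectedness, a path from \<open>f a\<close> to the end of one piece is extended along the next
  piece \<open>T\<close>: by compatibility its meeting with \<open>T\<close> has a last point in \<open>T\<close>, and cutting
  there produces two paths that connect. So \<open>f a\<close> and \<open>f b\<close> are joined by a path of
  the induced space or its inverse.\<close>

lemma Linear_order_iff:
  "Linear_order R \<longleftrightarrow> (\<forall>x\<in>Field R. (x, x) \<in> R) \<and> trans R \<and> antisym R \<and>
     (\<forall>x\<in>Field R. \<forall>y\<in>Field R. (x, y) \<in> R \<or> (y, x) \<in> R)"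
proof -
  have "R \<subseteq> Field R \<times> Field R"
    by (auto intro: FieldI1 FieldI2)
  moreover have "(\<forall>x\<in>Field R. \<forall>y\<in>Field R. x \<noteq> y \<longrightarrow> (x, y) \<in> R \<or> (y, x) \<in> R) \<longleftrightarrow>
      (\<forall>x\<in>Field R. \<forall>y\<in>Field R. (x, y) \<in> R \<or> (y, x) \<in> R)"
    if "\<forall>x\<in>Field R. (x, x) \<in> R"
    using that by metis
  ultimately show ?thesis
    unfolding linear_order_on_def partial_order_on_def preorder_on_def refl_on_def total_on_def
    by blast
qed

context
  fixes R :: "'a rel"
  assumes lin: "Linear_order R"
begin

lemma Linear_order_refl: "x \<in> Field R \<Longrightarrow> (x, x) \<in> R"
  using lin by (simp add: Linear_order_iff)

lemma Linear_order_trans: "(x, y) \<in> R \<Longrightarrow> (y, z) \<in> R \<Longrightarrow> (x, z) \<in> R"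
  using lin unfolding Linear_order_iff trans_def by blast

lemma Linear_order_antisym: "(x, y) \<in> R \<Longrightarrow> (y, x) \<in> R \<Longrightarrow> x = y"
  using lin unfolding Linear_order_iff antisym_def by blast

lemma Linear_order_total: "x \<in> Field R \<Longrightarrow> y \<in> Field R \<Longrightarrow> (x, y) \<notin> R \<Longrightarrow> (y, x) \<in> R"
  using lin unfolding Linear_order_iff by blast

end

lemma Linear_order_path: "is_path R \<Longrightarrow> Linear_order R"
  by (simp add: is_path_def)

lemma path_has_min_max:
  assumes "is_path R"
  obtains m M where "is_min R m" "is_max R M"
proof -
  from assms have "Field R \<noteq> {}" "complete_in R (Field R)"
    unfolding is_path_def by blast+
  then obtain s i where "is_sup R (Field R) s" "is_inf R (Field R) i"
    unfolding complete_in_def by blast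
  then show ?thesis
    using that unfolding is_sup_def is_inf_def is_max_def is_min_def by blast
qed

lemma rel_eqI: "(\<And>u v. (u, v) \<in> A \<longleftrightarrow> (u, v) \<in> B) \<Longrightarrow> A = B"
  by auto

lemma finite_has_greatest:
  assumes "Linear_order R" "finite A" "A \<noteq> {}" "A \<subseteq> Field R"
  shows "\<exists>m\<in>A. \<forall>a\<in>A. (a, m) \<in> R"
  using assms(2-4)
proof (induction A rule: finite_ne_induct)
  case (singleton x)
  then show ?case using Linear_order_refl[OF assms(1)] by simp
next
  case (insert x A)
  then obtain m where m: "m \<in> A" "\<forall>a\<in>A. (a, m) \<in> R" by auto
  show ?case
  proof (cases "(x, m) \<in> R")
    case True
    then show ?thesis using m by auto
  next
    case False
    then have "(m, x) \<in> R"
      using Linear_order_total[OF assms(1)] insert.prems m(1) by blast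
    then show ?thesis
      using m Linear_order_trans[OF assms(1)] Linear_order_refl[OF assms(1)] insert.prems by blast
  qed
qed

subsection \<open>Segments\<close>

lemma mem_segment:
  "(u, v) \<in> segment R x y \<longleftrightarrow> (u, v) \<in> R \<and> (x, u) \<in> R \<and> (u, y) \<in> R \<and> (x, v) \<in> R \<and> (v, y) \<in> R"
  unfolding segment_def by auto

lemma Field_segment_subset: "Field (segment R x y) \<subseteq> Field R"
  unfolding segment_def Field_def by auto

lemma Field_segment:
  assumes "Linear_order R"
  shows "Field (segment R x y) = {z. (x, z) \<in> R \<and> (z, y) \<in> R}"
  using Linear_order_refl[OF assms] unfolding segment_def Field_def by blast

lemma Linear_order_segment:
  assumes "Linear_order R"
  shows "Linear_order (segment R x y)"
proof -
  note lin = Linear_order_refl[OF assms] Linear_order_trans[OF assms]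
    Linear_order_antisym[OF assms] Linear_order_total[OF assms]
  have "trans (segment R x y)" "antisym (segment R x y)"
    using lin(2,3) unfolding trans_def antisym_def mem_segment by blast+
  moreover have "(u, u) \<in> segment R x y" if "u \<in> Field (segment R x y)" for u
    using that lin(1) unfolding Field_segment[OF assms] mem_segment by (blast intro: FieldI2)
  moreover have "(u, v) \<in> segment R x y \<or> (v, u) \<in> segment R x y"
    if "u \<in> Field (segment R x y)" "v \<in> Field (segment R x y)" for u v
    using that lin(4) unfolding Field_segment[OF assms] mem_segment by (blast intro: FieldI2)
  ultimately show ?thesis unfolding Linear_order_iff by blast
qed

lemma segment_min_max:
  assumes "Linear_order R" "(x, y) \<in> R"
  shows "is_min (segment R x y) x" "is_max (segment R x y) y"
  using assms Linear_order_refl[OF assms(1)]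
  unfolding is_min_def is_max_def Field_segment[OF assms(1)] mem_segment
  by (auto intro: FieldI1 FieldI2)

lemma segment_segment:
  assumes "Linear_order R" "(u, v) \<in> segment R x y"
  shows "segment (segment R x y) u v = segment R u v"
  using assms Linear_order_trans[OF assms(1)] unfolding segment_def by blast

lemma segment_whole:
  assumes "is_min R x" "is_max R y"
  shows "segment R x y = R"
  using assms unfolding segment_def is_min_def is_max_def by (auto intro: FieldI1 FieldI2)

lemma segment_singleton:
  assumes "Linear_order R" "x \<in> Field R"
  shows "segment R x x = {(x, x)}"
  using Linear_order_antisym[OF assms(1)] Linear_order_refl[OF assms]
  by (intro rel_eqI) (auto simp: mem_segment)

lemma Field_concat: "Field (concat P Q) = Field P \<union> Field Q"
  unfolding concat_def Field_def by auto

lemma mem_concat: "(a, b) \<in> concat P Q \<longleftrightarrow> (a, b) \<in> P \<or> (a, b) \<in> Q \<or> (a \<in> Field P \<and> b \<in> Field Q)"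
  unfolding concat_def by auto

lemma is_min_concat: "is_min P p \<Longrightarrow> is_min (concat P Q) p"
  unfolding is_min_def Field_concat mem_concat by blast

lemma is_max_concat: "is_max Q q \<Longrightarrow> is_max (concat P Q) q"
  unfolding is_max_def Field_concat mem_concat by blast

lemma segment_split:
  assumes "Linear_order R" "(x, v) \<in> R" "(v, z) \<in> R"
  shows "segment R x z = concat (segment R x v) (segment R v z)"
proof (rule rel_eqI)
  note trans = Linear_order_trans[OF assms(1)]
  fix p q
  show "(p, q) \<in> segment R x z \<longleftrightarrow> (p, q) \<in> concat (segment R x v) (segment R v z)"
  proof
    assume pq: "(p, q) \<in> segment R x z"
    then have "p \<in> Field R" "q \<in> Field R" "v \<in> Field R"
      using assms(2) by (auto simp: mem_segment intro: FieldI1 FieldI2)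
    then consider "(q, v) \<in> R" | "(v, p) \<in> R" | "(p, v) \<in> R" "(v, q) \<in> R"
      using Linear_order_total[OF assms(1)] by blast
    then show "(p, q) \<in> concat (segment R x v) (segment R v z)"
      using pq trans[of p q v] trans[of v p q]
      unfolding mem_concat Field_segment[OF assms(1)] mem_segment by cases blast+
  next
    assume "(p, q) \<in> concat (segment R x v) (segment R v z)"
    then consider "(p, q) \<in> R" "(x, p) \<in> R" "(q, v) \<in> R"
      | "(p, q) \<in> R" "(v, p) \<in> R" "(q, z) \<in> R"
      | "(x, p) \<in> R" "(p, v) \<in> R" "(v, q) \<in> R" "(q, z) \<in> R"
      unfolding mem_concat Field_segment[OF assms(1)] mem_segment by blast
    then show "(p, q) \<in> segment R x z"
    proof cases
      case 1
      then show ?thesis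
        using trans[OF 1(3) assms(3)] trans[OF 1(1) 1(3)] trans[OF 1(2) 1(1)]
          trans[OF trans[OF 1(1) 1(3)] assms(3)] by (simp add: mem_segment)
    next
      case 2
      then show ?thesis
        using trans[OF assms(2) 2(2)] trans[OF 2(1) 2(3)] trans[OF trans[OF assms(2) 2(2)] 2(1)]
        by (simp add: mem_segment)
    next
      case 3
      then show ?thesis
        using trans[OF 3(2) 3(3)] trans[OF trans[OF 3(2) 3(3)] 3(4)]
          trans[OF 3(1) trans[OF 3(2) 3(3)]] by (simp add: mem_segment)
    qed
  qed
qed

locale connecting_paths =
  fixes P Q :: "'a rel" and c :: 'a
  assumes Linear_order_left: "Linear_order P" and Linear_order_right: "Linear_order Q"
    and junction: "Field P \<inter> Field Q = {c}"
    and max_left: "is_max P c" and min_right: "is_min Q c"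
begin

lemma below_junction: "z \<in> Field P \<Longrightarrow> (z, c) \<in> P"
  using max_left unfolding is_max_def by blast

lemma above_junction: "z \<in> Field Q \<Longrightarrow> (c, z) \<in> Q"
  using min_right unfolding is_min_def by blast

lemma common_point: "z \<in> Field P \<Longrightarrow> z \<in> Field Q \<Longrightarrow> z = c"
  using junction by blast

lemma concat_mem_left:
  assumes "v \<in> Field P" "(u, v) \<in> concat P Q"
  shows "(u, v) \<in> P"
proof -
  consider "(u, v) \<in> P" | "(u, v) \<in> Q" | "u \<in> Field P" "v \<in> Field Q"
    using assms(2) unfolding mem_concat by blast
  then show ?thesis
  proof cases
    case 2
    then have "v = c" "u = c"
      using common_point[OF assms(1)] Linear_order_antisym[OF Linear_order_right]
        above_junction by (blast intro: FieldI1 FieldI2)+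
    then show ?thesis using Linear_order_refl[OF Linear_order_left] assms(1) by simp
  next
    case 3
    then show ?thesis using common_point[OF assms(1)] below_junction by blast
  qed
qed

lemma concat_mem_right:
  assumes "u \<in> Field Q" "(u, v) \<in> concat P Q"
  shows "(u, v) \<in> Q"
proof -
  consider "(u, v) \<in> Q" | "(u, v) \<in> P" | "u \<in> Field P" "v \<in> Field Q"
    using assms(2) unfolding mem_concat by blast
  then show ?thesis
  proof cases
    case 2
    then have "u = c" "v = c"
      using common_point[OF _ assms(1)] Linear_order_antisym[OF Linear_order_left]
        below_junction by (blast intro: FieldI1 FieldI2)+
    then show ?thesis using Linear_order_refl[OF Linear_order_right] assms(1) by simp
  next
    case 3
    then show ?thesis using common_point[OF _ assms(1)] above_junction by blast
  qed
qed

lemma trans_concat: "trans (concat P Q)"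
proof (rule transI)
  fix a b d
  assume ab: "(a, b) \<in> concat P Q" and bd: "(b, d) \<in> concat P Q"
  show "(a, d) \<in> concat P Q"
  proof (cases "d \<in> Field P")
    case True
    then have "(b, d) \<in> P" using concat_mem_left bd by blast
    then have "(a, b) \<in> P" using concat_mem_left ab by (blast intro: FieldI1)
    then show ?thesis
      using \<open>(b, d) \<in> P\<close> Linear_order_trans[OF Linear_order_left] by (auto simp: mem_concat)
  next
    case False
    then have "d \<in> Field Q" using FieldI2[OF bd] by (simp add: Field_concat)
    show ?thesis
    proof (cases "a \<in> Field Q")
      case True
      then have "(a, b) \<in> Q" using concat_mem_right ab by blast
      then have "(b, d) \<in> Q" using concat_mem_right bd by (blast intro: FieldI2)
      then show ?thesis
        using \<open>(a, b) \<in> Q\<close> Linear_order_trans[OF Linear_order_right] by (auto simp: mem_concat)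
    next
      case False
      then have "a \<in> Field P" using FieldI1[OF ab] by (simp add: Field_concat)
      then show ?thesis using \<open>d \<in> Field Q\<close> by (simp add: mem_concat)
    qed
  qed
qed

lemma antisym_concat: "antisym (concat P Q)"
proof (rule antisymI)
  fix a b
  assume ab: "(a, b) \<in> concat P Q" and ba: "(b, a) \<in> concat P Q"
  have "a \<in> Field P \<union> Field Q" "b \<in> Field P \<union> Field Q"
    using FieldI1[OF ab] FieldI2[OF ab] by (simp_all add: Field_concat)
  then show "a = b"
    using concat_mem_left[OF _ ab] concat_mem_left[OF _ ba] concat_mem_right[OF _ ab]
      concat_mem_right[OF _ ba] Linear_order_antisym[OF Linear_order_left]
      Linear_order_antisym[OF Linear_order_right] by (blast intro: FieldI1 FieldI2)
qed

lemma Linear_order_concat: "Linear_order (concat P Q)"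
proof -
  have "(x, x) \<in> concat P Q" if "x \<in> Field (concat P Q)" for x
    using that Linear_order_refl[OF Linear_order_left] Linear_order_refl[OF Linear_order_right]
    unfolding Field_concat mem_concat by blast
  moreover have "(x, y) \<in> concat P Q \<or> (y, x) \<in> concat P Q"
    if "x \<in> Field (concat P Q)" "y \<in> Field (concat P Q)" for x y
  proof -
    have "x \<in> Field P \<union> Field Q" "y \<in> Field P \<union> Field Q"
      using that by (simp_all add: Field_concat)
    then show ?thesis
      using Linear_order_total[OF Linear_order_left, of x y]
        Linear_order_total[OF Linear_order_right, of x y] unfolding mem_concat by blast
  qed
  ultimately show ?thesis
    using trans_concat antisym_concat unfolding Linear_order_iff by blast
qed

lemma segment_concat_left:
  assumes "(x, y) \<in> P"
  shows "segment (concat P Q) x y = segment P x y"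
proof (rule rel_eqI)
  fix u v
  show "(u, v) \<in> segment (concat P Q) x y \<longleftrightarrow> (u, v) \<in> segment P x y"
  proof
    assume "(u, v) \<in> segment (concat P Q) x y"
    then show "(u, v) \<in> segment P x y"
      using FieldI2[OF assms] concat_mem_left unfolding mem_segment by (metis FieldI1)
  qed (auto simp: mem_segment mem_concat)
qed

lemma segment_concat_right:
  assumes "(x, y) \<in> Q"
  shows "segment (concat P Q) x y = segment Q x y"
proof (rule rel_eqI)
  fix u v
  show "(u, v) \<in> segment (concat P Q) x y \<longleftrightarrow> (u, v) \<in> segment Q x y"
  proof
    assume "(u, v) \<in> segment (concat P Q) x y"
    then show "(u, v) \<in> segment Q x y"
      using FieldI1[OF assms] concat_mem_right unfolding mem_segment by (metis FieldI2)
  qed (auto simp: mem_segment mem_concat)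
qed

context
  fixes x y
  assumes x: "x \<in> Field P" and y: "y \<in> Field Q"
begin

lemma segment_concat_across:
  "segment (concat P Q) x y = concat (segment P x c) (segment Q c y)"
proof -
  have "(x, c) \<in> concat P Q" "(c, y) \<in> concat P Q"
    using below_junction[OF x] above_junction[OF y] by (simp_all add: mem_concat)
  then show ?thesis
    using segment_split[OF Linear_order_concat \<open>(x, c) \<in> concat P Q\<close> \<open>(c, y) \<in> concat P Q\<close>]
      below_junction[OF x] above_junction[OF y]
    by (simp add: segment_concat_left segment_concat_right)
qed

lemma connects_segments_across: "connects (segment P x c) (segment Q c y)"
proof -
  have max: "is_max (segment P x c) c" and min: "is_min (segment Q c y) c"
    using segment_min_max[OF Linear_order_left below_junction[OF x]]
      segment_min_max[OF Linear_order_right above_junction[OF y]] by blast+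
  have "Field (segment P x c) \<inter> Field (segment Q c y) \<subseteq> {c}"
    using Field_segment_subset[of P x c] Field_segment_subset[of Q c y] junction by blast
  moreover have "c \<in> Field (segment P x c)" "c \<in> Field (segment Q c y)"
    using max min unfolding is_max_def is_min_def by blast+
  ultimately show ?thesis
    unfolding connects_def using max min by blast
qed

end

end

subsection \<open>Generated spaces\<close>

lemma Linear_order_hat:
  assumes "\<forall>X\<in>Q. Linear_order X" "R \<in> hat Q"
  shows "Linear_order R"
  using assms(2)
proof induction
  case (seg P x y)
  then show ?case using assms(1) Linear_order_segment by metis
next
  case (cat P R)
  then obtain c where "connecting_paths P R c"
    unfolding connects_def connecting_paths_def by blast
  then show ?case by (rule connecting_paths.Linear_order_concat)
qed

lemma segment_in_hat:
  assumes "\<forall>X\<in>Q. Linear_order X" "R \<in> hat Q" "(x, y) \<in> R"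
  shows "segment R x y \<in> hat Q"
  using assms(2,3)
proof (induction arbitrary: x y)
  case (seg P u v)
  then have "segment (segment P u v) x y = segment P x y"
    using assms(1) segment_segment by metis
  moreover have "(x, y) \<in> P" using seg.prems by (simp add: mem_segment)
  ultimately show ?case using seg.hyps(1) hat.seg by metis
next
  case (cat P R)
  then obtain c where "connecting_paths P R c"
    using Linear_order_hat[OF assms(1)] unfolding connects_def connecting_paths_def by metis
  then interpret connecting_paths P R c .
  consider "(x, y) \<in> P" | "(x, y) \<in> R" | "x \<in> Field P" "y \<in> Field R"
    using cat.prems unfolding mem_concat by blast
  then show ?case
  proof cases
    case 1
    then show ?thesis using cat.IH(1) segment_concat_left by metis
  next
    case 2
    then show ?thesis using cat.IH(2) segment_concat_right by metis
  next
    case 3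
    then show ?thesis
      using cat.IH(1)[OF below_junction] cat.IH(2)[OF above_junction]
        segment_concat_across connects_segments_across hat.cat by metis
  qed
qed

lemma hat_mono: "Q \<subseteq> Q' \<Longrightarrow> hat Q \<subseteq> hat Q'"
proof
  fix R
  assume "Q \<subseteq> Q'" "R \<in> hat Q"
  then show "R \<in> hat Q'"
    by (induction rule: hat.induct[OF \<open>R \<in> hat Q\<close>]) (auto intro: hat.intros)
qed

lemma path_in_hat:
  assumes "X \<in> Q" "is_min X p" "is_max X q"
  shows "X \<in> hat Q"
proof -
  have "(p, q) \<in> X" using assms(2,3) unfolding is_min_def is_max_def by blast
  then have "segment X p q \<in> hat Q" by (rule hat.seg[OF assms(1)])
  then show ?thesis using segment_whole[OF assms(2,3)] by simp
qed

lemma Field_hat_subset: "R \<in> hat Q \<Longrightarrow> Field R \<subseteq> ground Q"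
proof (induction rule: hat.induct)
  case (seg P x y)
  then show ?case using Field_segment_subset[of P x y] unfolding ground_def by blast
qed (simp add: Field_concat)

lemma dipath_space_path: "dipath_space S \<Longrightarrow> P \<in> S \<Longrightarrow> is_path P"
  by (simp add: dipath_space_def)

lemma dipath_space_segment:
  assumes "dipath_space S" "P \<in> S" "(x, y) \<in> P"
  shows "segment P x y \<in> S"
proof -
  have "segments P \<subseteq> S" using assms(1,2) by (simp add: dipath_space_def)
  then show ?thesis using assms(3) unfolding segments_def by blast
qed

lemma dipath_space_compatible:
  "dipath_space S \<Longrightarrow> P \<in> S \<Longrightarrow> Q \<in> S \<Longrightarrow> complete_in P (Field P \<inter> Field Q)"
  by (simp add: dipath_space_def compatible_def)

lemma hat_Field_finite_union:
  assumes "dipath_space S" "Q \<subseteq> S" "R \<in> hat Q"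
  shows "\<exists>F. finite F \<and> F \<subseteq> S \<and> Field R = \<Union>(Field ` F)"
  using assms(3)
proof induction
  case (seg P x y)
  then have "segment P x y \<in> S"
    using assms(1,2) dipath_space_segment by (metis subsetD)
  then show ?case by (intro exI[of _ "{segment P x y}"]) simp
next
  case (cat P R)
  obtain F where "finite F" "F \<subseteq> S" "Field P = \<Union>(Field ` F)"
    using cat.IH(1) by (elim exE conjE)
  moreover obtain G where "finite G" "G \<subseteq> S" "Field R = \<Union>(Field ` G)"
    using cat.IH(2) by (elim exE conjE)
  ultimately show ?case by (intro exI[of _ "F \<union> G"]) (simp add: Field_concat)
qed

lemma is_min_converse: "is_max R q \<Longrightarrow> is_min (converse R) q"
  unfolding is_max_def is_min_def by simp

lemma is_max_converse: "is_min R q \<Longrightarrow> is_max (converse R) q"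
  unfolding is_max_def is_min_def by simp

lemma mem_img: "(p, q) \<in> img f I \<longleftrightarrow> (\<exists>a b. (a, b) \<in> I \<and> p = f a \<and> q = f b)"
  unfolding img_def by force

lemma Field_img: "Field (img f I) = f ` Field I"
  unfolding img_def Field_def by force

lemma img_concat: "img f (concat A B) = concat (img f A) (img f B)"
  unfolding concat_def img_def Field_img[unfolded img_def] by (auto simp: image_Un)

lemma mem_img_inj_iff:
  assumes "inj_on f (Field I)" "a \<in> Field I" "b \<in> Field I"
  shows "(f a, f b) \<in> img f I \<longleftrightarrow> (a, b) \<in> I"
  using assms unfolding mem_img inj_on_def by (blast intro: FieldI1 FieldI2)

lemma img_segment_min_max:
  assumes "Linear_order R" "(x, z) \<in> R"
  shows "is_min (img f (segment R x z)) (f x)" "is_max (img f (segment R x z)) (f z)"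
  using segment_min_max[OF assms]
  unfolding is_min_def is_max_def Field_img mem_img by blast+

lemma segment_img:
  assumes "inj_on f (Field I)" "(a, b) \<in> I"
  shows "segment (img f I) (f a) (f b) = img f (segment I a b)"
proof (rule rel_eqI)
  fix p q
  have ab: "a \<in> Field I" "b \<in> Field I" using assms(2) by (auto intro: FieldI1 FieldI2)
  show "(p, q) \<in> segment (img f I) (f a) (f b) \<longleftrightarrow> (p, q) \<in> img f (segment I a b)"
  proof
    assume "(p, q) \<in> segment (img f I) (f a) (f b)"
    moreover obtain u v where uv: "(u, v) \<in> I" "p = f u" "q = f v"
      using calculation unfolding mem_segment mem_img by blast
    ultimately have "(u, v) \<in> segment I a b"
      using mem_img_inj_iff[OF assms(1)] ab FieldI1[OF uv(1)] FieldI2[OF uv(1)]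
      unfolding mem_segment by metis
    then show "(p, q) \<in> img f (segment I a b)" using uv unfolding mem_img by blast
  next
    assume "(p, q) \<in> img f (segment I a b)"
    then show "(p, q) \<in> segment (img f I) (f a) (f b)"
      unfolding mem_segment mem_img by blast
  qed
qed

lemma img_segment_split:
  assumes "Linear_order R" "inj_on f (Field (segment R x z))" "(x, v) \<in> R" "(v, z) \<in> R"
  shows "img f (segment R x z) = concat (img f (segment R x v)) (img f (segment R v z))"
    and "connects (img f (segment R x v)) (img f (segment R v z))"
proof -
  note split = segment_split[OF assms(1,3,4)]
  then show "img f (segment R x z) = concat (img f (segment R x v)) (img f (segment R v z))"
    by (simp add: img_concat)
  have max: "is_max (img f (segment R x v)) (f v)" and min: "is_min (img f (segment R v z)) (f v)"
    using img_segment_min_max[OF assms(1,3)] img_segment_min_max[OF assms(1,4)] by blast+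
  have "t = v" if "t \<in> Field (segment R x v)" "t' \<in> Field (segment R v z)" "f t = f t'" for t t'
  proof -
    have "t = t'"
      using that assms(2) unfolding split Field_concat inj_on_def by blast
    with that show "t = v"
      using Linear_order_antisym[OF assms(1)] unfolding Field_segment[OF assms(1)] by blast
  qed
  then have "Field (img f (segment R x v)) \<inter> Field (img f (segment R v z)) \<subseteq> {f v}"
    unfolding Field_img by blast
  moreover have "f v \<in> Field (img f (segment R x v))" "f v \<in> Field (img f (segment R v z))"
    using max min unfolding is_max_def is_min_def by blast+
  ultimately show "connects (img f (segment R x v)) (img f (segment R v z))"
    unfolding connects_def using max min by (intro exI[of _ "f v"]) auto
qed

subsection \<open>Extending paths inside a dipath space\<close>

lemma complete_finite_union_greatest:
  assumes "Linear_order T" "finite F" "\<forall>G\<in>F. complete_in T (Field T \<inter> Field G)"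
    and "Field T \<inter> \<Union>(Field ` F) \<noteq> {}"
  shows "\<exists>m\<in>Field T \<inter> \<Union>(Field ` F). \<forall>z\<in>Field T \<inter> \<Union>(Field ` F). (z, m) \<in> T"
proof -
  define F' where "F' = {G \<in> F. Field T \<inter> Field G \<noteq> {}}"
  have "\<exists>s\<in>Field T \<inter> Field G. \<forall>z\<in>Field T \<inter> Field G. (z, s) \<in> T" if "G \<in> F'" for G
  proof -
    have "complete_in T (Field T \<inter> Field G)" "Field T \<inter> Field G \<noteq> {}"
      using that assms(3) unfolding F'_def by blast+
    then obtain s where "s \<in> Field T \<inter> Field G" "is_sup T (Field T \<inter> Field G) s"
      unfolding complete_in_def by blast
    then show ?thesis unfolding is_sup_def by blast
  qed
  then obtain top where top: "\<And>G. G \<in> F' \<Longrightarrow> top G \<in> Field T \<inter> Field G"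
    "\<And>G z. G \<in> F' \<Longrightarrow> z \<in> Field T \<inter> Field G \<Longrightarrow> (z, top G) \<in> T"
    by metis
  have "finite (top ` F')" "top ` F' \<noteq> {}" "top ` F' \<subseteq> Field T"
    using assms(2,4) top(1) unfolding F'_def by auto
  then obtain m where m: "m \<in> top ` F'" "\<forall>a\<in>top ` F'. (a, m) \<in> T"
    using finite_has_greatest[OF assms(1)] by metis
  have "(z, m) \<in> T" if z: "z \<in> Field T \<inter> \<Union>(Field ` F)" for z
  proof -
    obtain G where "G \<in> F'" "z \<in> Field T \<inter> Field G"
      using z unfolding F'_def by blast
    then show ?thesis
      using top(2) m(2) Linear_order_trans[OF assms(1)] by blast
  qed
  moreover have "m \<in> Field T \<inter> \<Union>(Field ` F)"
    using m(1) top(1) unfolding F'_def by blast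
  ultimately show ?thesis by blast
qed

lemma connects_segments_at_last_meet:
  assumes lin: "Linear_order R" "Linear_order T" and "(p, m) \<in> R" "(m, q) \<in> T"
    and last: "\<And>z. z \<in> Field T \<inter> Field R \<Longrightarrow> (z, m) \<in> T"
  shows "connects (segment R p m) (segment T m q)"
proof -
  have max: "is_max (segment R p m) m" and min: "is_min (segment T m q) m"
    using segment_min_max[OF lin(1) assms(3)] segment_min_max[OF lin(2) assms(4)] by blast+
  have "z = m" if "z \<in> Field (segment R p m)" "z \<in> Field (segment T m q)" for z
  proof -
    have "(m, z) \<in> T" "z \<in> Field R"
      using that Field_segment_subset[of R p m] unfolding Field_segment[OF lin(2)] by blast+
    then show "z = m"
      using last Linear_order_antisym[OF lin(2)] by (meson FieldI2 IntI)
  qed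
  moreover have "m \<in> Field (segment R p m)" "m \<in> Field (segment T m q)"
    using max min unfolding is_max_def is_min_def by blast+
  ultimately show ?thesis
    unfolding connects_def using max min by (intro exI[of _ m]) blast
qed

text \<open>Compatibility is what makes the cut point \<open>m\<close> exist: the part of \<open>T\<close> met by \<open>R\<close>
  is a finite union of sets that are complete in \<open>T\<close>, so it has a last point.\<close>

lemma hat_join_path:
  assumes S: "dipath_space S" "Q \<subseteq> S" and R: "R \<in> hat Q" "is_min R p" "c \<in> Field R"
    and T: "T \<in> Q" "c \<in> Field T" "is_max T q"
  shows "\<exists>U\<in>hat Q. is_min U p \<and> is_max U q"
proof -
  have lin_Q: "\<forall>X\<in>Q. Linear_order X"
    using S Linear_order_path dipath_space_path by blast
  have lin_T: "Linear_order T" and lin_R: "Linear_order R"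
    using lin_Q T(1) Linear_order_hat[OF lin_Q R(1)] by blast+
  obtain F where F: "finite F" "F \<subseteq> S" "Field R = \<Union>(Field ` F)"
    using hat_Field_finite_union[OF S R(1)] by blast
  have "\<forall>G\<in>F. complete_in T (Field T \<inter> Field G)"
    using F(2) by (auto intro: dipath_space_compatible[OF S(1) subsetD[OF S(2) T(1)]])
  moreover have "Field T \<inter> \<Union>(Field ` F) \<noteq> {}"
    using R(3) T(2) F(3) by blast
  ultimately obtain m where m: "m \<in> Field T \<inter> Field R" "\<And>z. z \<in> Field T \<inter> Field R \<Longrightarrow> (z, m) \<in> T"
    using complete_finite_union_greatest[OF lin_T F(1)] unfolding F(3) by metis
  have pm: "(p, m) \<in> R" and mq: "(m, q) \<in> T"
    using R(2) T(3) m(1) unfolding is_min_def is_max_def by blast+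
  have "segment R p m \<in> hat Q" "segment T m q \<in> hat Q"
    using segment_in_hat[OF lin_Q R(1) pm] hat.seg[OF T(1) mq] .
  then have "concat (segment R p m) (segment T m q) \<in> hat Q"
    using hat.cat connects_segments_at_last_meet[OF lin_R lin_T pm mq m(2)] by blast
  then show ?thesis
    using is_min_concat[OF segment_min_max(1)[OF lin_R pm]]
      is_max_concat[OF segment_min_max(2)[OF lin_T mq]] by blast
qed

subsection \<open>Walks\<close>

locale walk_in_dipath_space =
  fixes S :: "'a rel set" and P :: "'b rel" and f :: "'b \<Rightarrow> 'a"
  assumes dipath_space: "dipath_space S" and walk: "walk S P f"
begin

abbreviation Sf :: "'a rel set" where
  "Sf \<equiv> walk_paths S P f"

lemma path_domain: "is_path P"
  using walk by (simp add: walk_def)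

lemma Linear_order_domain: "Linear_order P"
  using Linear_order_path[OF path_domain] .

definition good_piece :: "'b \<Rightarrow> 'b \<Rightarrow> bool" where
  "good_piece v w \<longleftrightarrow>
     (v, w) \<in> P \<and> inj_on f (Field (segment P v w)) \<and> img f (segment P v w) \<in> S"

lemma mem_Sf: "X \<in> Sf \<longleftrightarrow> (\<exists>x z. X = img f (segment P x z) \<and> good_piece x z)"
  by (auto simp: walk_paths_def good_piece_def)

lemma Sf_subset: "Sf \<subseteq> S"
  by (auto simp: mem_Sf good_piece_def)

lemma good_piece_refl:
  assumes "a \<in> Field P"
  shows "good_piece a a"
proof -
  obtain X where X: "X \<in> S" "f a \<in> Field X"
    using walk assms unfolding walk_def ground_def by blast
  have lin_X: "Linear_order X"
    using Linear_order_path[OF dipath_space_path[OF dipath_space X(1)]] .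
  have "segment X (f a) (f a) \<in> S"
    using dipath_space_segment[OF dipath_space X(1) Linear_order_refl[OF lin_X X(2)]] .
  then show ?thesis
    using Linear_order_refl[OF Linear_order_domain assms]
    unfolding good_piece_def segment_singleton[OF Linear_order_domain assms]
      segment_singleton[OF lin_X X(2)] img_def by simp
qed

lemma good_piece_sub:
  assumes good: "good_piece v w" and "(v, x) \<in> P" "(x, z) \<in> P" "(z, w) \<in> P"
  shows "img f (segment P x z) = segment (img f (segment P v w)) (f x) (f z)"
    and "good_piece x z"
proof -
  note trans = Linear_order_trans[OF Linear_order_domain]
  have inj: "inj_on f (Field (segment P v w))" and in_S: "img f (segment P v w) \<in> S"
    using good unfolding good_piece_def by blast+
  have xz: "(x, z) \<in> segment P v w"
    using assms(2-4) trans[OF assms(2) assms(3)] trans[OF assms(3) assms(4)]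
    by (simp add: mem_segment)
  show eq: "img f (segment P x z) = segment (img f (segment P v w)) (f x) (f z)"
    using segment_img[OF inj xz] segment_segment[OF Linear_order_domain xz] by simp
  have "(f x, f z) \<in> img f (segment P v w)"
    using xz unfolding mem_img by blast
  then have "img f (segment P x z) \<in> S"
    unfolding eq by (rule dipath_space_segment[OF dipath_space in_S])
  moreover have "Field (segment P x z) \<subseteq> Field (segment P v w)"
    using assms(2-4) trans unfolding Field_segment[OF Linear_order_domain] by blast
  ultimately show "good_piece x z"
    unfolding good_piece_def using assms(3) inj_on_subset[OF inj] by blast
qed

lemma walk_right:
  assumes "x \<in> Field P" "\<not> is_max P x"
  obtains y where "(x, y) \<in> P" "y \<noteq> x"
    "\<And>z. (x, z) \<in> P \<Longrightarrow> z \<noteq> x \<Longrightarrow> (z, y) \<in> P \<Longrightarrow> good_piece x z"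
  using walk assms unfolding walk_def good_piece_def by blast

lemma walk_left:
  assumes "x \<in> Field P" "\<not> is_min P x"
  obtains y where "(y, x) \<in> P" "y \<noteq> x"
    "\<And>z. (y, z) \<in> P \<Longrightarrow> z \<noteq> x \<Longrightarrow> (z, x) \<in> P \<Longrightarrow> good_piece z x"
  using walk assms unfolding walk_def good_piece_def by blast

inductive piece_chain :: "'b \<Rightarrow> 'b \<Rightarrow> ('b \<times> 'b) set \<Rightarrow> bool" where
  start: "good_piece a a \<Longrightarrow> piece_chain a a {(a, a)}"
| step: "piece_chain a v C \<Longrightarrow> good_piece v w \<Longrightarrow> piece_chain a w (insert (v, w) C)"

lemma piece_chain_le: "piece_chain a t C \<Longrightarrow> (a, t) \<in> P"
  by (induction rule: piece_chain.induct)
    (auto simp: good_piece_def intro: Linear_order_trans[OF Linear_order_domain])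

lemma piece_chain_finite: "piece_chain a t C \<Longrightarrow> finite C"
  by (induction rule: piece_chain.induct) auto

lemma piece_chain_good: "piece_chain a t C \<Longrightarrow> (v, w) \<in> C \<Longrightarrow> good_piece v w"
  by (induction rule: piece_chain.induct) auto

lemma piece_chain_sup:
  assumes "a \<in> G" "\<And>g. g \<in> G \<Longrightarrow> \<exists>C. piece_chain a g C" "is_sup P G s"
  shows "\<exists>C. piece_chain a s C"
proof (cases "s = a")
  case True
  then show ?thesis using assms(1,2) by blast
next
  case False
  have s: "s \<in> Field P" and ub: "\<And>g. g \<in> G \<Longrightarrow> (g, s) \<in> P"
    and least: "\<And>u. u \<in> Field P \<Longrightarrow> \<forall>g\<in>G. (g, u) \<in> P \<Longrightarrow> (s, u) \<in> P"
    using assms(3) unfolding is_sup_def by blast+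
  have "\<not> is_min P s"
    using ub[OF assms(1)] False Linear_order_antisym[OF Linear_order_domain]
    unfolding is_min_def by (metis FieldI1)
  then obtain y where y: "(y, s) \<in> P" "y \<noteq> s"
    and piece: "\<And>z. (y, z) \<in> P \<Longrightarrow> z \<noteq> s \<Longrightarrow> (z, s) \<in> P \<Longrightarrow> good_piece z s"
    using walk_left[OF s] by metis
  have "\<not> (\<forall>g\<in>G. (g, y) \<in> P)"
    using least[OF FieldI1[OF y(1)]] y Linear_order_antisym[OF Linear_order_domain] by metis
  then obtain g where "g \<in> G" "(y, g) \<in> P"
    using Linear_order_total[OF Linear_order_domain] ub FieldI1[OF y(1)] by (metis FieldI1)
  moreover obtain C where "piece_chain a g C"
    using assms(2) calculation(1) by blast
  ultimately show ?thesis
    using piece ub piece_chain.step by (cases "g = s") blast+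
qed

lemma piece_chain_continues:
  assumes "piece_chain a s C" "(s, b) \<in> P" "s \<noteq> b"
  shows "\<exists>y. (s, y) \<in> P \<and> y \<noteq> s \<and> (y, b) \<in> P \<and> (\<exists>C. piece_chain a y C)"
proof -
  have s: "s \<in> Field P" and b: "b \<in> Field P"
    using assms(2) by (blast intro: FieldI1 FieldI2)+
  have "\<not> is_max P s"
    using assms(2,3) b Linear_order_antisym[OF Linear_order_domain] unfolding is_max_def by metis
  then obtain y where y: "(s, y) \<in> P" "y \<noteq> s"
    and piece: "\<And>z. (s, z) \<in> P \<Longrightarrow> z \<noteq> s \<Longrightarrow> (z, y) \<in> P \<Longrightarrow> good_piece s z"
    using walk_right[OF s] by metis
  define y' where "y' = (if (y, b) \<in> P then y else b)"
  have "(s, y') \<in> P" "y' \<noteq> s" "(y', y) \<in> P" "(y', b) \<in> P"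
    unfolding y'_def using y assms(2,3) b FieldI2[OF y(1)] Linear_order_refl[OF Linear_order_domain]
      Linear_order_total[OF Linear_order_domain] by auto
  then show ?thesis
    using piece_chain.step[OF assms(1) piece] by blast
qed

text \<open>The supremum of the points reachable by a piece chain is reachable by
  the left condition of the walk, and must be \<open>b\<close> by the right condition.\<close>

lemma piece_chain_exists:
  assumes "(a, b) \<in> P"
  shows "\<exists>C. piece_chain a b C"
proof -
  define G where "G = {t. (t, b) \<in> P \<and> (\<exists>C. piece_chain a t C)}"
  have a: "a \<in> Field P" and b: "b \<in> Field P"
    using assms by (blast intro: FieldI1 FieldI2)+
  have "a \<in> G"
    unfolding G_def using assms piece_chain.start[OF good_piece_refl[OF a]] by blast
  moreover have "G \<subseteq> Field P"
    unfolding G_def by (blast intro: FieldI1)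
  ultimately obtain s where sup: "is_sup P G s"
    using path_domain unfolding is_path_def complete_in_def by blast
  then obtain C where C: "piece_chain a s C"
    using piece_chain_sup[OF \<open>a \<in> G\<close>] unfolding G_def by blast
  have sb: "(s, b) \<in> P"
    using sup b unfolding is_sup_def G_def by blast
  have "s = b"
  proof (rule ccontr)
    assume "s \<noteq> b"
    then obtain y where "(s, y) \<in> P" "y \<noteq> s" "y \<in> G"
      using piece_chain_continues[OF C sb] unfolding G_def by blast
    then show False
      using sup Linear_order_antisym[OF Linear_order_domain] unfolding is_sup_def by blast
  qed
  then show ?thesis using C by blast
qed

lemma subpiece_in_hat:
  assumes "good_piece v w" "img f (segment P v w) \<in> Q" "(v, x) \<in> P" "(x, z) \<in> P" "(z, w) \<in> P"
  shows "img f (segment P x z) \<in> hat Q"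
proof -
  note trans = Linear_order_trans[OF Linear_order_domain]
  have "(x, z) \<in> segment P v w"
    using assms(3-5) trans[OF assms(3,4)] trans[OF assms(4,5)] by (simp add: mem_segment)
  then have "(f x, f z) \<in> img f (segment P v w)"
    unfolding mem_img by blast
  then show ?thesis
    using hat.seg[OF assms(2)] good_piece_sub(1)[OF assms(1,3-5)] by simp
qed

definition piece_paths :: "('b \<times> 'b) set \<Rightarrow> 'a rel set" where
  "piece_paths C = (\<lambda>(v, w). img f (segment P v w)) ` C"

lemma piece_paths_subset:
  assumes "piece_chain a t C"
  shows "piece_paths C \<subseteq> Sf"
proof
  fix X assume "X \<in> piece_paths C"
  then obtain v w where "(v, w) \<in> C" "X = img f (segment P v w)"
    unfolding piece_paths_def by auto
  then show "X \<in> Sf"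
    unfolding mem_Sf using piece_chain_good[OF assms] by blast
qed

text \<open>Injectivity on all of \<open>[x, z]\<close> is what allows gluing the parts of \<open>[x, z]\<close> in
  consecutive pieces: their images meet only at the common endpoint.\<close>

lemma injective_subwalk_in_hat:
  assumes "piece_chain a t C" "(a, x) \<in> P" "(x, z) \<in> P" "(z, t) \<in> P"
    and "inj_on f (Field (segment P x z))"
  shows "img f (segment P x z) \<in> hat (piece_paths C)"
  using assms
proof (induction arbitrary: x z rule: piece_chain.induct)
  case (start a)
  note lin = Linear_order_domain
  have "x = a" "z = a"
    using start.prems Linear_order_antisym[OF lin] Linear_order_trans[OF lin] by metis+
  moreover have "(a, a) \<in> P"
    using start.hyps unfolding good_piece_def by blast
  moreover have "img f (segment P a a) \<in> piece_paths {(a, a)}"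
    by (simp add: piece_paths_def)
  ultimately show ?case
    using path_in_hat img_segment_min_max[OF lin] by metis
next
  case (step a v C w)
  note lin = Linear_order_domain
  let ?Q = "piece_paths (insert (v, w) C)"
  have IH_mono: "img f (segment P x' z') \<in> hat ?Q"
    if "(a, x') \<in> P" "(x', z') \<in> P" "(z', v) \<in> P" "inj_on f (Field (segment P x' z'))" for x' z'
    using step.IH[OF that] hat_mono[of "piece_paths C" ?Q] unfolding piece_paths_def by blast
  have in_piece: "img f (segment P x' z') \<in> hat ?Q"
    if "(v, x') \<in> P" "(x', z') \<in> P" "(z', w) \<in> P" for x' z'
    using subpiece_in_hat[OF step.hyps(2) _ that] unfolding piece_paths_def by simp
  have v: "v \<in> Field P"
    using piece_chain_le[OF step.hyps(1)] by (rule FieldI2)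
  consider "(z, v) \<in> P" | "(v, x) \<in> P" | "(x, v) \<in> P" "(v, z) \<in> P"
    using Linear_order_total[OF lin] v FieldI1[OF step.prems(2)] FieldI2[OF step.prems(2)] by metis
  then show ?case
  proof cases
    case 1
    then show ?thesis using IH_mono step.prems(1,2,4) by blast
  next
    case 2
    then show ?thesis using in_piece step.prems(2,3) by blast
  next
    case 3
    note split = img_segment_split[OF lin step.prems(4) 3]
    have "inj_on f (Field (segment P x v))"
      using step.prems(4) inj_on_subset segment_split[OF lin 3] Field_concat by (metis Un_upper1)
    then have "img f (segment P x v) \<in> hat ?Q"
      using IH_mono step.prems(1) 3(1) Linear_order_refl[OF lin v] by blast
    moreover have "img f (segment P v z) \<in> hat ?Q"
      using in_piece 3(2) step.prems(3) Linear_order_refl[OF lin v] by blast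
    ultimately show ?thesis
      unfolding split(1) using split(2) by (rule hat.cat)
  qed
qed

lemma hat_Sf_eq_piece_paths:
  assumes "piece_chain m M C" "is_min P m" "is_max P M"
  shows "hat Sf = hat (piece_paths C)"
proof
  show "hat (piece_paths C) \<subseteq> hat Sf"
    using hat_mono[OF piece_paths_subset[OF assms(1)]] .
  show "hat Sf \<subseteq> hat (piece_paths C)"
  proof
    fix R assume "R \<in> hat Sf"
    then show "R \<in> hat (piece_paths C)"
    proof induction
      case (seg X p q)
      then obtain x z where X: "X = img f (segment P x z)" "good_piece x z"
        unfolding mem_Sf by blast
      obtain x' z' where xz': "(x', z') \<in> segment P x z" "p = f x'" "q = f z'"
        using seg.hyps(2) unfolding X(1) mem_img by blast
      then have le: "(x, x') \<in> P" "(x', z') \<in> P" "(z', z) \<in> P"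
        by (simp_all add: mem_segment)
      then have "img f (segment P x' z') \<in> hat (piece_paths C)"
        using injective_subwalk_in_hat[OF assms(1)] good_piece_sub(2)[OF X(2) le] assms(2,3)
        unfolding good_piece_def is_min_def is_max_def by (metis FieldI1 FieldI2)
      then show ?case
        using good_piece_sub(1)[OF X(2) le] X(1) xz'(2,3) by simp
    qed (rule hat.cat)
  qed
qed

lemma finitary_induced: "finitary (hat Sf)"
proof -
  obtain m M where m: "is_min P m" and M: "is_max P M"
    using path_has_min_max[OF path_domain] .
  then have "(m, M) \<in> P"
    unfolding is_min_def is_max_def by blast
  then obtain C where C: "piece_chain m M C"
    using piece_chain_exists by blast
  have "finite (piece_paths C)"
    unfolding piece_paths_def using piece_chain_finite[OF C] by simp
  moreover have "\<forall>X\<in>piece_paths C. is_path X"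
    using piece_paths_subset[OF C] Sf_subset dipath_space_path[OF dipath_space] by blast
  ultimately show ?thesis
    unfolding finitary_def using hat_Sf_eq_piece_paths[OF C m M] by metis
qed

lemma piece_chain_joins:
  assumes "piece_chain a t C"
  shows "\<exists>R\<in>hat Sf. is_min R (f a) \<and> is_max R (f t)"
  using assms
proof induction
  case (start a)
  then have "img f (segment P a a) \<in> Sf" "(a, a) \<in> P"
    unfolding mem_Sf good_piece_def by blast+
  then show ?case
    using path_in_hat img_segment_min_max[OF Linear_order_domain] by metis
next
  case (step a v C w)
  obtain R where R: "R \<in> hat Sf" "is_min R (f a)" "is_max R (f v)"
    using step.IH by blast
  have vw: "(v, w) \<in> P" and T: "img f (segment P v w) \<in> Sf"
    using step.hyps(2) unfolding mem_Sf good_piece_def by blast+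
  have "f v \<in> Field R" "f v \<in> Field (img f (segment P v w))"
    using R(3) img_segment_min_max(1)[OF Linear_order_domain vw] unfolding is_min_def is_max_def
    by blast+
  then show ?case
    using hat_join_path[OF dipath_space Sf_subset R(1,2) _ T _
        img_segment_min_max(2)[OF Linear_order_domain vw]] by blast
qed

lemma ground_bar_induced: "ground (bar (hat Sf)) \<subseteq> f ` Field P"
proof
  fix y assume "y \<in> ground (bar (hat Sf))"
  then obtain X where X: "X \<in> bar (hat Sf)" "y \<in> Field X"
    unfolding ground_def by blast
  have "y \<in> ground (hat Sf \<union> converse ` hat Sf)"
    using subsetD[OF Field_hat_subset[OF X(1)[unfolded bar_def]] X(2)] .
  then obtain R where R: "R \<in> hat Sf" "y \<in> Field R"
    unfolding ground_def by auto
  have "y \<in> ground Sf"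
    using subsetD[OF Field_hat_subset[OF R(1)] R(2)] .
  then obtain x z where "y \<in> f ` Field (segment P x z)"
    unfolding ground_def by (auto simp: mem_Sf Field_img)
  then show "y \<in> f ` Field P"
    using Field_segment_subset[of P x z] by blast
qed

lemma sim_bar_induced:
  assumes "(a, b) \<in> P"
  shows "sim (bar (hat Sf)) (f a) (f b)" "sim (bar (hat Sf)) (f b) (f a)"
proof -
  obtain C where "piece_chain a b C"
    using piece_chain_exists[OF assms] ..
  then obtain R where R: "R \<in> hat Sf" "is_min R (f a)" "is_max R (f b)"
    using piece_chain_joins by blast
  have R': "is_min (converse R) (f b)" "is_max (converse R) (f a)"
    using is_min_converse[OF R(3)] is_max_converse[OF R(2)] .
  have "R \<in> hat Sf \<union> converse ` hat Sf" "converse R \<in> hat Sf \<union> converse ` hat Sf"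
    using R(1) by auto
  then have "R \<in> bar (hat Sf)" "converse R \<in> bar (hat Sf)"
    unfolding bar_def using path_in_hat R(2,3) R' by metis+
  then show "sim (bar (hat Sf)) (f a) (f b)" "sim (bar (hat Sf)) (f b) (f a)"
    unfolding sim_def using R(2,3) R' by blast+
qed

lemma dipath_connected_induced: "dipath_connected (hat Sf)"
proof -
  have sim: "sim (bar (hat Sf)) (f a) (f b)" if "a \<in> Field P" "b \<in> Field P" for a b
    using that sim_bar_induced Linear_order_total[OF Linear_order_domain] by metis
  obtain m where m: "m \<in> Field P"
    using path_domain unfolding is_path_def by blast
  then obtain R where "R \<in> bar (hat Sf)" "is_min R (f m)"
    using sim[OF m m] unfolding sim_def by blast
  then have "ground (bar (hat Sf)) \<noteq> {}"
    unfolding ground_def is_min_def by blast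
  then show ?thesis
    unfolding dipath_connected_def path_connected_space_def
    using sim ground_bar_induced by blast
qed

end

theorem mainTheorem3:
  fixes S :: "'a rel set" and P :: "'b rel" and f :: "'b \<Rightarrow> 'a"
  assumes "dipath_space S"
    and "walk S P f"
  shows "finitary (induced_space S P f) \<and> dipath_connected (induced_space S P f)"
proof -
  interpret walk_in_dipath_space S P f
    using assms by unfold_locales
  show ?thesis
    unfolding induced_space_def using finitary_induced dipath_connected_induced ..
qed

end
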